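(* (Optimality condition) Let $\mathcal{X}$ be a nonempty convex subset of $\mathbb{R}^n$ and $\mathbf{F}:\mathcal{X}\to I(\mathbb{R})$ a convex interval-valued function. If $\widehat{\mathbf{0}}=(\mathbf{0},\dots,\mathbf{0})\in\partial\mathbf{F}(\bar{x})$ for some $\bar{x}\in\mathcal{X}$, then $\bar{x}$ is an efficient solution of the problem $\min_{x\in\mathcal{X}}\mathbf{F}(x)$.
   Context: $I(\mathbb{R})$: nonempty compact intervals $\mathbf{A}=[\underline{a},\overline{a}]$; $\mathbf{0}=[0,0]$; $\mathbf{A}\oplus\mathbf{B}=[\underline{a}+\underline{b},\overline{a}+\overline{b}]$; $\lambda\odot\mathbf{A}=[\min\{\lambda\underline{a},\lambda\overline{a}\},\max\{\lambda\underline{a},\lambda\overline{a}\}]$; $\mathbf{A}\ominus_{gH}\mathbf{B}=[\min\{\underline{a}-\underline{b},\overline{a}-\overline{b}\},\max\{\underline{a}-\underline{b},\overline{a}-\overline{b}\}]$; $\mathbf{A}\preceq\mathbf{B}$ iff $\underline{a}\le\underline{b}$ and $\overline{a}\le\overline{b}$; $\mathbf{A}\prec\mathbf{B}$ iff either ($\underline{a}\le\underline{b}$ and $\overline{a}<\overline{b}$) or ($\underline{a}<\underline{b}$ and $\overline{a}\le\overline{b}$); $d^T\odot\widehat{\mathbf{G}}=\bigoplus_i d_i\odot\mathbf{G}_i$. Convex IVF: $\mathbf{F}(\lambda x_1+(1-\lambda)x_2)\preceq\lambda\odot\mathbf{F}(x_1)\oplus(1-\lambda)\odot\mathbf{F}(x_2)$.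 $gH$-subgradient at $\bar{x}$: $\widehat{\mathbf{G}}\in I(\mathbb{R})^n$ with $(x-\bar{x})^T\odot\widehat{\mathbf{G}}\preceq\mathbf{F}(x)\ominus_{gH}\mathbf{F}(\bar{x})$ for all $x\in\mathcal{X}$; $\partial\mathbf{F}(\bar{x})$ is their set. A point $\bar{x}\in\mathcal{X}$ is an efficient solution of $\min_{x\in\mathcal{X}}\mathbf{F}(x)$ if $\mathbf{F}(x)\not\prec\mathbf{F}(\bar{x})$ for all $x\in\mathcal{X}$, $x\ne\bar{x}$. *)

theory Defs
  imports "HOL-Analysis.Analysis" "HOL-Library.Interval"
begin

text \<open>Compact intervals I(R) are the library type real interval
  (nonempty closed intervals, accessed via lower / upper).
  The library order on intervals is inclusion, so the paper's order
  relations and operations are defined explicitly below.\<close>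

definition ivl_zero :: "real interval" where
  "ivl_zero = Interval (0, 0)"

definition ivl_add :: "real interval \<Rightarrow> real interval \<Rightarrow> real interval" where
  "ivl_add A B = Interval (lower A + lower B, upper A + upper B)"

definition ivl_scale :: "real \<Rightarrow> real interval \<Rightarrow> real interval" where
  "ivl_scale l A = Interval (min (l * lower A) (l * upper A), max (l * lower A) (l * upper A))"

definition ivl_gH_minus :: "real interval \<Rightarrow> real interval \<Rightarrow> real interval" where
  "ivl_gH_minus A B = Interval (min (lower A - lower B) (upper A - upper B),
                                max (lower A - lower B) (upper A - upper B))"

definition ivl_le :: "real interval \<Rightarrow> real interval \<Rightarrow> bool" where
  "ivl_le A B \<longleftrightarrow> lower A \<le> lower B \<and> upper A \<le> upper B"

definition ivl_lt :: "real interval \<Rightarrow> real interval \<Rightarrow> bool" where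
  "ivl_lt A B \<longleftrightarrow> (lower A \<le> lower B \<and> upper A < upper B) \<or> (lower A < lower B \<and> upper A \<le> upper B)"

definition ivl_dot :: "real ^ 'n \<Rightarrow> real interval ^ 'n \<Rightarrow> real interval" where
  "ivl_dot d G = Interval ((\<Sum>i\<in>UNIV. lower (ivl_scale (d $ i) (G $ i))),
                           (\<Sum>i\<in>UNIV. upper (ivl_scale (d $ i) (G $ i))))"

definition convex_ivf :: "(real ^ 'n) set \<Rightarrow> (real ^ 'n \<Rightarrow> real interval) \<Rightarrow> bool" where
  "convex_ivf X F \<longleftrightarrow> (\<forall>x1\<in>X. \<forall>x2\<in>X. \<forall>l::real. 0 \<le> l \<and> l \<le> 1 \<longrightarrow>
      ivl_le (F (l *\<^sub>R x1 + (1 - l) *\<^sub>R x2)) (ivl_add (ivl_scale l (F x1)) (ivl_scale (1 - l) (F x2))))"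

definition gH_subdiff :: "(real ^ 'n) set \<Rightarrow> (real ^ 'n \<Rightarrow> real interval) \<Rightarrow> real ^ 'n \<Rightarrow> (real interval ^ 'n) set" where
  "gH_subdiff X F xb = {G. \<forall>x\<in>X. ivl_le (ivl_dot (x - xb) G) (ivl_gH_minus (F x) (F xb))}"

definition efficient_solution :: "(real ^ 'n) set \<Rightarrow> (real ^ 'n \<Rightarrow> real interval) \<Rightarrow> real ^ 'n \<Rightarrow> bool" where
  "efficient_solution X F xb \<longleftrightarrow> xb \<in> X \<and> (\<forall>x\<in>X. x \<noteq> xb \<longrightarrow> \<not> ivl_lt (F x) (F xb))"

end

theory Submission
  imports Defs
begin

(* The subgradient inequality for the zero subgradient says that F xb \<preceq> F x for every x,
   and a point dominated by no other value in the order \<preceq> cannot be beaten in \<prec>. *)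

lemma lower_Interval: "a \<le> b \<Longrightarrow> lower (Interval (a, b)) = a"
  by (simp add: lower.rep_eq Interval_inverse)

lemma upper_Interval: "a \<le> b \<Longrightarrow> upper (Interval (a, b)) = b"
  by (simp add: upper.rep_eq Interval_inverse)

lemma lower_ivl_zero [simp]: "lower ivl_zero = 0"
  and upper_ivl_zero [simp]: "upper ivl_zero = 0"
  by (simp_all add: ivl_zero_def lower_Interval upper_Interval)

lemma ivl_scale_zero_right [simp]: "ivl_scale c ivl_zero = ivl_zero"
  unfolding ivl_scale_def by simp (simp add: ivl_zero_def)

lemma ivl_dot_zero_right [simp]: "ivl_dot d (\<chi> i. ivl_zero) = ivl_zero"
  unfolding ivl_dot_def by simp (simp add: ivl_zero_def)

lemma ivl_le_zero_gH_minus_iff: "ivl_le ivl_zero (ivl_gH_minus A B) \<longleftrightarrow> ivl_le B A"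
  by (auto simp: ivl_le_def ivl_gH_minus_def lower_Interval upper_Interval)

lemma zero_in_gH_subdiff_iff:
  "(\<chi> i. ivl_zero) \<in> gH_subdiff X F xb \<longleftrightarrow> (\<forall>x\<in>X. ivl_le (F xb) (F x))"
  by (simp add: gH_subdiff_def ivl_le_zero_gH_minus_iff)

lemma not_ivl_lt_if_ivl_le: "ivl_le B A \<Longrightarrow> \<not> ivl_lt A B"
  by (auto simp: ivl_le_def ivl_lt_def)

theorem mainTheorem17:
  fixes X :: "(real ^ 'n) set" and F :: "real ^ 'n \<Rightarrow> real interval" and xb :: "real ^ 'n"
  assumes "X \<noteq> {}" and "convex X" and "convex_ivf X F"
    and "xb \<in> X" and "(\<chi> i. ivl_zero) \<in> gH_subdiff X F xb"
  shows "efficient_solution X F xb"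
proof -
  have "\<forall>x\<in>X. ivl_le (F xb) (F x)"
    using assms(5) by (simp add: zero_in_gH_subdiff_iff)
  then show ?thesis
    using assms(4) by (simp add: efficient_solution_def not_ivl_lt_if_ivl_le)
qed

end
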